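(* Let $A:\mathbb{R}^n\to\mathbb{R}^n$ be a nonsingular linear operator that is generalized sign-regular (GSR) with respect to a totally positive structure $\{K_1,\ldots,K_n\}$. Then for every $j=1,\ldots,n$: $$A(\widehat{T}(K_j))\subseteq\widehat{T}(K_j)\qquad\text{and}\qquad A(\widehat{T}(K_1,\ldots,K_j))\subseteq\widehat{T}(K_1,\ldots,K_j).$$
   Context: A proper cone is a closed convex cone that is pointed and solid. $\wedge^j\mathbb{R}^n$ is the $j$th exterior power of $\mathbb{R}^n$; $\wedge^jA$ is the operator on it with $(\wedge^jA)(x_1\wedge\cdots\wedge x_j)=Ax_1\wedge\cdots\wedge Ax_j$. A linear operator $B$ is $K$-nonnegative if $BK\subseteq K$. A totally positive structure is a family $\{K_1,\ldots,K_n\}$, $K_j\subset\wedge^j\mathbb{R}^n$ a proper cone; $A$ is GSR with respect to it if there are $\epsilon_1,\ldots,\epsilon_n\in\{\pm1\}$ with $\epsilon_j\wedge^jA$ being $K_j$-nonnegative for each $j$. Define $\widehat{T}(K_1)=K_1\cup(-K_1)$; for $j\ge2$, $\widehat{T}(K_j)$ is the set of all $x_1\in\mathbb{R}^n$ for which there exist $x_2,\ldots,x_j\in\mathbb{R}^n$ with $x_1\wedge\cdots\wedge x_j\in(K_j\cup(-K_j))\setminus\{0\}$, together with $0$; and $\widehat{T}(K_1,\ldots,K_j)$ is the closure of the set of all $x_1\in\mathbb{R}^n$ for which there exist $x_2\in\widehat{T}(K_1)\setminus\{0\},\ldots,x_j\in\widehat{T}(K_1,\ldots,K_{j-1})\setminus\{0\}$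 with $x_1\wedge\cdots\wedge x_j\in(K_j\cup(-K_j))\setminus\{0\}$. *)

theory Defs
  imports "HOL-Analysis.Analysis"
begin

text \<open>Concrete model: R^n is real^('n::{finite,linorder}); the exterior power wedge^j R^n is the subspace
 of real^(('n::{finite,linorder}) set) of vectors supported on j-element index sets I (basis e_I,
 I = {i_1 < ... < i_j}).\<close>

definition ext_space :: "nat \<Rightarrow> (real ^ (('n::{finite,linorder}) set)) set" where
  "ext_space j = {w. \<forall>I. card I \<noteq> j \<longrightarrow> w $ I = 0}"

definition wedge :: "(real ^ (('n::{finite,linorder}))) list \<Rightarrow> real ^ (('n::{finite,linorder}) set)" where
  "wedge xs = (\<chi> I. if card I = length xs then
      (\<Sum>p\<in>{p. p permutes {..<length xs}}. sign p *
         (\<Prod>k<length xs. (xs ! k) $ (sorted_list_of_set I ! p k)))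
     else 0)"

definition ext_pow :: "nat \<Rightarrow> real ^ (('n::{finite,linorder})) ^ (('n::{finite,linorder})) \<Rightarrow> real ^ ((('n::{finite,linorder})) set) \<Rightarrow> real ^ ((('n::{finite,linorder})) set)" where
  "ext_pow j A w = (\<Sum>I\<in>{I. card I = j}.
       w $ I *\<^sub>R wedge (map (\<lambda>i. A *v axis i 1) (sorted_list_of_set I)))"

definition proper_cone :: "nat \<Rightarrow> (real ^ (('n::{finite,linorder}) set)) set \<Rightarrow> bool" where
  "proper_cone j K \<longleftrightarrow> K \<subseteq> ext_space j \<and> closed K \<and> convex K \<and> cone K \<and>
     K \<inter> uminus ` K \<subseteq> {0} \<and>
     (\<exists>x\<in>K. \<exists>e>0. ball x e \<inter> ext_space j \<subseteq> K)"

definition K_nonneg :: "(real ^ (('n::{finite,linorder}) set)) set \<Rightarrow> (real ^ (('n::{finite,linorder}) set) \<Rightarrow> real ^ (('n::{finite,linorder}) set)) \<Rightarrow> bool" where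
  "K_nonneg K B \<longleftrightarrow> B ` K \<subseteq> K"

definition TP_structure :: "(nat \<Rightarrow> (real ^ (('n::{finite,linorder}) set)) set) \<Rightarrow> bool" where
  "TP_structure K \<longleftrightarrow> (\<forall>j\<in>{1..CARD(('n::{finite,linorder}))}. proper_cone j (K j))"

definition GSR :: "(nat \<Rightarrow> (real ^ (('n::{finite,linorder}) set)) set) \<Rightarrow> real ^ ('n::{finite,linorder}) ^ ('n::{finite,linorder}) \<Rightarrow> bool" where
  "GSR K A \<longleftrightarrow> (\<exists>\<epsilon>::nat \<Rightarrow> real. \<forall>j\<in>{1..CARD(('n::{finite,linorder}))}.
      \<epsilon> j \<in> {-1, 1} \<and> K_nonneg (K j) (\<lambda>w. \<epsilon> j *\<^sub>R ext_pow j A w))"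

text \<open>T-hat(K_j), as a subset of R^n (K_1 is identified with a subset of R^n via x |-> wedge [x]).\<close>
definition That :: "(nat \<Rightarrow> (real ^ (('n::{finite,linorder}) set)) set) \<Rightarrow> nat \<Rightarrow> (real ^ ('n::{finite,linorder})) set" where
  "That K j = (if j = 1 then {x. wedge [x] \<in> K 1 \<union> uminus ` K 1}
     else {x. \<exists>xs. length xs = j - 1 \<and> wedge (x # xs) \<in> (K j \<union> uminus ` K j) - {0}} \<union> {0})"

text \<open>Tseq K j = T-hat(K_1,...,K_j); x_{i+2} = xs!i must lie in T-hat(K_1,...,K_{i+1}) minus 0.\<close>
function Tseq :: "(nat \<Rightarrow> (real ^ (('n::{finite,linorder}) set)) set) \<Rightarrow> nat \<Rightarrow> (real ^ ('n::{finite,linorder})) set" where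
  "Tseq K 0 = {}"
| "Tseq K (Suc 0) = That K 1"
| "Tseq K (Suc (Suc m)) = closure {x. \<exists>xs. length xs = Suc m \<and>
      (\<forall>i<Suc m. xs ! i \<in> Tseq K (Suc i) - {0}) \<and>
      wedge (x # xs) \<in> (K (Suc (Suc m)) \<union> uminus ` K (Suc (Suc m))) - {0}}"
  by pat_completeness auto
termination
  by (relation "Wellfounded.measure (\<lambda>(K, j). j)") auto

end

theory Submission
  imports Defs
begin

text \<open>The exterior power acts on decomposable vectors by
  \<open>\<wedge>\<^sup>jA (x\<^sub>1 \<wedge> \<dots> \<wedge> x\<^sub>j) = Ax\<^sub>1 \<wedge> \<dots> \<wedge> Ax\<^sub>j\<close>; in coordinates this is the Cauchy--Binet
  formula, obtained by expanding each \<open>Ax\<^sub>k\<close>, discarding the non-injective column choices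
  (alternating minors) and sorting the injective ones.  Since \<open>A\<close> is nonsingular,
  \<open>Ax\<^sub>1 \<wedge> \<dots> \<wedge> Ax\<^sub>j\<close> vanishes only if \<open>x\<^sub>1 \<wedge> \<dots> \<wedge> x\<^sub>j\<close> does, and sign regularity makes
  \<open>\<wedge>\<^sup>jA\<close> map \<open>K\<^sub>j \<union> -K\<^sub>j\<close> into itself.  Hence applying \<open>A\<close> to a witness list for
  \<open>x \<in> T(K\<^sub>j)\<close> gives a witness list for \<open>Ax\<close>.  For \<open>T(K\<^sub>1,\<dots>,K\<^sub>j)\<close> the side conditions
  on \<open>x\<^sub>2, x\<^sub>3, \<dots>\<close> are handled by induction on \<open>j\<close>, and continuity of \<open>A\<close> carries the
  invariance of a set over to its closure.\<close>

definition minor :: "real^'n^'m \<Rightarrow> 'm list \<Rightarrow> nat \<Rightarrow> (nat \<Rightarrow> 'n) \<Rightarrow> real" where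
  "minor A rs j cs = (\<Sum>p | p permutes {..<j}. sign p * (\<Prod>k<j. A $ (rs ! p k) $ cs k))"

lemma minor_cong: "(\<And>k. k < j \<Longrightarrow> cs k = cs' k) \<Longrightarrow> minor A rs j cs = minor A rs j cs'"
  unfolding minor_def by (intro sum.cong prod.cong refl) auto

lemma minor_compose_permutation:
  assumes s: "s permutes {..<j}"
  shows "minor A rs j (cs \<circ> s) = sign s * minor A rs j cs"
proof -
  have "minor A rs j (cs \<circ> s) =
      (\<Sum>p | p permutes {..<j}. sign (p \<circ> s) * (\<Prod>k<j. A $ (rs ! p (s k)) $ cs (s k)))"
    unfolding minor_def by (subst sum_permutations_compose_right[OF s]) simp
  also have "\<dots> = (\<Sum>p | p permutes {..<j}. sign s * (sign p * (\<Prod>k<j. A $ (rs ! p k) $ cs k)))"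
  proof (intro sum.cong refl)
    fix p assume "p \<in> {p. p permutes {..<j}}"
    then have "sign (p \<circ> s) = sign p * sign s"
      using s by (intro sign_compose) (auto simp: permutation_permutes)
    moreover have "(\<Prod>k<j. A $ (rs ! p (s k)) $ cs (s k)) = (\<Prod>k<j. A $ (rs ! p k) $ cs k)"
      using prod.reindex_bij_betw[OF permutes_imp_bij[OF s], of "\<lambda>k. A $ (rs ! p k) $ cs k"] by simp
    ultimately show "sign (p \<circ> s) * (\<Prod>k<j. A $ (rs ! p (s k)) $ cs (s k)) =
        sign s * (sign p * (\<Prod>k<j. A $ (rs ! p k) $ cs k))"
      by simp
  qed
  also have "\<dots> = sign s * minor A rs j cs"
    unfolding minor_def by (simp add: sum_distrib_left)
  finally show ?thesis .
qed

lemma minor_eq_0_if_not_inj_on: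
  assumes "\<not> inj_on cs {..<j}"
  shows "minor A rs j cs = 0"
proof -
  obtain a b where ab: "a < j" "b < j" "a \<noteq> b" "cs a = cs b"
    using assms unfolding inj_on_def by auto
  have "Transposition.transpose a b permutes {..<j}"
    using ab by (intro permutes_swap_id) auto
  moreover have "cs \<circ> Transposition.transpose a b = cs"
    using ab by (auto simp: Transposition.transpose_def)
  ultimately have "minor A rs j cs = - minor A rs j cs"
    using minor_compose_permutation[of "Transposition.transpose a b" j A rs cs] ab
    by (simp add: sign_swap_id)
  then show ?thesis by simp
qed

text \<open>An injective map on \<open>{..<j}\<close> is the increasing enumeration of its image, a
  \<open>j\<close>-set, composed with a permutation.\<close>

lemma sum_inj_on_lessThan_by_image:
  fixes F :: "(nat \<Rightarrow> 'n::{finite,linorder}) \<Rightarrow> 'a::comm_monoid_add"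
  shows "(\<Sum>g | g \<in> {..<j} \<rightarrow>\<^sub>E UNIV \<and> inj_on g {..<j}. F g) =
    (\<Sum>J | card J = j. \<Sum>s | s permutes {..<j}. F (restrict (\<lambda>k. sorted_list_of_set J ! s k) {..<j}))"
proof -
  define \<phi> :: "'n set \<times> (nat \<Rightarrow> nat) \<Rightarrow> nat \<Rightarrow> 'n"
    where "\<phi> = (\<lambda>(J, s). restrict (\<lambda>k. sorted_list_of_set J ! s k) {..<j})"
  let ?T = "Sigma {J::'n set. card J = j} (\<lambda>_. {s. s permutes {..<j}})"
  have nth_bij: "bij_betw ((!) (sorted_list_of_set J)) {..<j} J" if "card J = j" for J :: "'n set"
    using that by (intro bij_betw_nth) auto
  have image_\<phi>: "\<phi> (J, s) ` {..<j} = J" if "(J, s) \<in> ?T" for J s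
  proof -
    have "\<phi> (J, s) ` {..<j} = (!) (sorted_list_of_set J) ` s ` {..<j}"
      by (auto simp: \<phi>_def)
    also have "\<dots> = J"
      using that nth_bij[of J] by (simp add: permutes_image bij_betw_def)
    finally show ?thesis .
  qed
  have "bij_betw \<phi> ?T {g. g \<in> {..<j} \<rightarrow>\<^sub>E UNIV \<and> inj_on g {..<j}}"
  proof (rule bij_betwI')
    fix a b assume a: "a \<in> ?T" and b: "b \<in> ?T"
    obtain J s J' s' where [simp]: "a = (J, s)" "b = (J', s')" by fastforce
    show "\<phi> a = \<phi> b \<longleftrightarrow> a = b"
    proof
      assume eq: "\<phi> a = \<phi> b"
      then have [simp]: "J' = J" using image_\<phi> a b by (metis \<open>a = (J, s)\<close> \<open>b = (J', s')\<close>)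
      have s: "s permutes {..<j}" and s': "s' permutes {..<j}" and J: "card J = j"
        using a b by auto
      have "s k = s' k" for k
      proof (cases "k < j")
        case True
        then have "sorted_list_of_set J ! s k = sorted_list_of_set J ! s' k"
          using fun_cong[OF eq, of k] by (simp add: \<phi>_def)
        moreover have "s k < j" "s' k < j"
          using True permutes_in_image[OF s] permutes_in_image[OF s'] by auto
        ultimately show ?thesis
          using J by (simp add: nth_eq_iff_index_eq)
      qed (simp add: permutes_not_in[OF s] permutes_not_in[OF s'])
      then show "a = b" by auto
    qed simp
  next
    fix a assume a: "a \<in> ?T"
    then obtain J s where [simp]: "a = (J, s)" and J: "card J = j" and s: "s permutes {..<j}"
      by fastforce
    have "inj_on (\<lambda>k. sorted_list_of_set J ! s k) {..<j}"
      using comp_inj_on[OF permutes_inj_on[OF s], of "(!) (sorted_list_of_set J)"] nth_bij[OF J]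
      by (simp add: bij_betw_def permutes_image[OF s] o_def)
    then show "\<phi> a \<in> {g. g \<in> {..<j} \<rightarrow>\<^sub>E UNIV \<and> inj_on g {..<j}}"
      by (simp add: \<phi>_def)
  next
    fix g :: "nat \<Rightarrow> 'n" assume "g \<in> {g. g \<in> {..<j} \<rightarrow>\<^sub>E UNIV \<and> inj_on g {..<j}}"
    then have g: "g \<in> {..<j} \<rightarrow>\<^sub>E UNIV" "inj_on g {..<j}" by auto
    define J :: "'n set" where "J = g ` {..<j}"
    define L where "L = sorted_list_of_set J"
    define s where "s k = (if k < j then the_inv_into {..<j} ((!) L) (g k) else k)" for k
    have J: "card J = j" using g(2) by (simp add: J_def card_image)
    have "bij_betw (the_inv_into {..<j} ((!) L) \<circ> g) {..<j} {..<j}"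
      using bij_betw_the_inv_into[OF nth_bij[OF J]] g(2)
      by (intro bij_betw_trans) (auto simp: L_def J_def bij_betw_def)
    then have "bij_betw s {..<j} {..<j}"
      by (rule bij_betw_cong[THEN iffD1, rotated]) (simp add: s_def)
    then have s: "s permutes {..<j}"
      by (rule bij_imp_permutes) (simp add: s_def)
    have "\<phi> (J, s) = g"
    proof
      fix k show "\<phi> (J, s) k = g k"
        using g(1) f_the_inv_into_f_bij_betw[OF nth_bij[OF J]]
        by (auto simp: \<phi>_def s_def L_def J_def PiE_def extensional_def)
    qed
    then show "\<exists>a\<in>?T. g = \<phi> a" using J s by blast
  qed
  then have "(\<Sum>g | g \<in> {..<j} \<rightarrow>\<^sub>E UNIV \<and> inj_on g {..<j}. F g) = (\<Sum>a\<in>?T. F (\<phi> a))"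
    by (simp add: sum.reindex_bij_betw)
  also have "\<dots> = (\<Sum>J | card J = j. \<Sum>s | s permutes {..<j}. F (restrict (\<lambda>k. sorted_list_of_set J ! s k) {..<j}))"
    by (subst sum.Sigma) (auto simp: finite_permutations \<phi>_def split_def)
  finally show ?thesis .
qed

lemma wedge_component:
  "wedge xs $ I = (if card I = length xs then
      (\<Sum>p | p permutes {..<length xs}. sign p * (\<Prod>k<length xs. xs ! k $ (sorted_list_of_set I ! p k)))
     else 0)"
  unfolding wedge_def by simp

lemma ext_pow_component:
  "ext_pow j A w $ I =
    (\<Sum>J | card J = j. w $ J * wedge (map (\<lambda>i. A *v axis i 1) (sorted_list_of_set J)) $ I)"
  unfolding ext_pow_def by (simp add: sum_component)

lemma wedge_columns_component:
  fixes J :: "'n::{finite,linorder} set"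
  assumes "card J = j" "card I = j"
  shows "wedge (map (\<lambda>i. A *v axis i 1) (sorted_list_of_set J)) $ I
     = minor A (sorted_list_of_set I) j ((!) (sorted_list_of_set J))"
  using assms unfolding wedge_component minor_def
  by (auto simp: matrix_vector_mult_basis column_def intro!: sum.cong prod.cong)

lemma wedge_map_component_expand:
  fixes xs :: "(real ^ 'n::{finite,linorder}) list"
  assumes "card I = length xs"
  shows "wedge (map (\<lambda>x. A *v x) xs) $ I =
    (\<Sum>g | g \<in> {..<length xs} \<rightarrow>\<^sub>E UNIV \<and> inj_on g {..<length xs}.
       (\<Prod>k<length xs. xs ! k $ g k) * minor A (sorted_list_of_set I) (length xs) g)"
    (is "_ = (\<Sum>g\<in>?Gi. ?X g * ?D g)")
proof -
  let ?j = "length xs" and ?rs = "sorted_list_of_set I"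
  let ?G = "{..<?j} \<rightarrow>\<^sub>E (UNIV :: 'n set)"
  have "wedge (map (\<lambda>x. A *v x) xs) $ I =
      (\<Sum>p | p permutes {..<?j}. sign p * (\<Prod>k<?j. \<Sum>i\<in>UNIV. A $ (?rs ! p k) $ i * xs ! k $ i))"
    using assms by (auto simp: wedge_component matrix_vector_mult_def intro!: sum.cong prod.cong)
  also have "\<dots> = (\<Sum>p | p permutes {..<?j}. sign p * (\<Sum>g\<in>?G. \<Prod>k<?j. A $ (?rs ! p k) $ g k * xs ! k $ g k))"
    by (subst prod_sum_PiE) auto
  also have "\<dots> = (\<Sum>p | p permutes {..<?j}. \<Sum>g\<in>?G. ?X g * (sign p * (\<Prod>k<?j. A $ (?rs ! p k) $ g k)))"
    by (simp add: sum_distrib_left prod.distrib mult_ac)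
  also have "\<dots> = (\<Sum>g\<in>?G. ?X g * ?D g)"
    by (subst sum.swap) (simp add: minor_def sum_distrib_left)
  also have "\<dots> = (\<Sum>g\<in>?Gi. ?X g * ?D g)"
    by (rule sum.mono_neutral_right) (auto simp: finite_PiE minor_eq_0_if_not_inj_on)
  finally show ?thesis .
qed

lemma ext_pow_wedge:
  fixes xs :: "(real ^ 'n::{finite,linorder}) list"
  shows "ext_pow (length xs) A (wedge xs) = wedge (map (\<lambda>x. A *v x) xs)"
proof (rule vec_eq_iff[THEN iffD2], rule allI)
  fix I :: "'n set"
  let ?j = "length xs" and ?rs = "sorted_list_of_set I"
  let ?e = "\<lambda>J. sorted_list_of_set (J :: 'n set)"
  show "ext_pow ?j A (wedge xs) $ I = wedge (map (\<lambda>x. A *v x) xs) $ I"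
  proof (cases "card I = ?j")
    case False
    then show ?thesis
      by (auto intro!: sum.neutral simp: ext_pow_component wedge_component)
  next
    case True
    have "wedge (map (\<lambda>x. A *v x) xs) $ I =
        (\<Sum>J | card J = ?j. \<Sum>s | s permutes {..<?j}.
          (\<Prod>k<?j. xs ! k $ (?e J ! s k)) * minor A ?rs ?j (restrict (\<lambda>k. ?e J ! s k) {..<?j}))"
      unfolding wedge_map_component_expand[OF True] sum_inj_on_lessThan_by_image by simp
    also have "\<dots> = (\<Sum>J | card J = ?j. \<Sum>s | s permutes {..<?j}.
        sign s * (\<Prod>k<?j. xs ! k $ (?e J ! s k)) * minor A ?rs ?j ((!) (?e J)))"
    proof (intro sum.cong refl)
      fix J s assume "s \<in> {s. s permutes {..<?j}}"
      then have "minor A ?rs ?j (restrict (\<lambda>k. ?e J ! s k) {..<?j}) = sign s * minor A ?rs ?j ((!) (?e J))"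
        using minor_cong[of ?j "restrict (\<lambda>k. ?e J ! s k) {..<?j}" "(!) (?e J) \<circ> s"]
        by (simp add: minor_compose_permutation)
      then show "(\<Prod>k<?j. xs ! k $ (?e J ! s k)) * minor A ?rs ?j (restrict (\<lambda>k. ?e J ! s k) {..<?j}) =
          sign s * (\<Prod>k<?j. xs ! k $ (?e J ! s k)) * minor A ?rs ?j ((!) (?e J))"
        by simp
    qed
    also have "\<dots> = (\<Sum>J | card J = ?j. wedge xs $ J * minor A ?rs ?j ((!) (?e J)))"
      by (auto simp: wedge_component sum_distrib_right intro!: sum.cong)
    also have "\<dots> = ext_pow ?j A (wedge xs) $ I"
      unfolding ext_pow_component using True by (auto simp: wedge_columns_component intro!: sum.cong)
    finally show ?thesis by simp
  qed
qed

lemma ext_pow_uminus: "ext_pow j A (- w) = - ext_pow j A w"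
  unfolding ext_pow_def by (simp add: sum_negf[symmetric])

lemma wedge_map_neq_0:
  fixes A :: "real ^ 'n::{finite,linorder} ^ 'n::{finite,linorder}"
  assumes "invertible A" "wedge xs \<noteq> 0"
  shows "wedge (map (\<lambda>x. A *v x) xs) \<noteq> 0"
proof
  assume image_0: "wedge (map (\<lambda>x. A *v x) xs) = 0"
  obtain B where "B ** A = mat 1"
    using assms(1) invertible_left_inverse by blast
  then have "map (\<lambda>x. B *v x) (map (\<lambda>x. A *v x) xs) = xs"
    by (simp add: matrix_vector_mul_assoc map_idI)
  then have "wedge xs = ext_pow (length xs) B (wedge (map (\<lambda>x. A *v x) xs))"
    by (metis ext_pow_wedge length_map)
  also have "\<dots> = 0"
    unfolding image_0 ext_pow_def by simp
  finally show False
    using assms(2) by simp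
qed

lemma image_Un_uminus_subset:
  fixes f :: "'a::real_vector \<Rightarrow> 'a"
  assumes "e \<in> {-1, 1}" "(\<lambda>w. e *\<^sub>R f w) ` K \<subseteq> K" "\<And>w. f (- w) = - f w"
  shows "f ` (K \<union> uminus ` K) \<subseteq> K \<union> uminus ` K"
proof (rule image_subsetI)
  have "- v \<in> K \<union> uminus ` K" if "v \<in> K \<union> uminus ` K" for v
    using that by (auto intro: image_eqI[of _ uminus "- v"])
  moreover have "f u \<in> K \<union> uminus ` K" if "u \<in> K" for u
  proof -
    have "e *\<^sub>R f u \<in> K"
      using assms(2) that by blast
    moreover have "f u = e *\<^sub>R (e *\<^sub>R f u)"
      using assms(1) by auto
    ultimately show ?thesis
      using assms(1) by (auto intro: image_eqI[of _ uminus "- f u"])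
  qed
  moreover fix w assume "w \<in> K \<union> uminus ` K"
  ultimately show "f w \<in> K \<union> uminus ` K"
    using assms(3) by (metis UnE imageE)
qed

lemma GSR_ext_pow_image_subset:
  assumes "GSR K A" "j \<in> {1..CARD('n::{finite,linorder})}"
  shows "ext_pow j A ` (K j \<union> uminus ` K j) \<subseteq> K j \<union> uminus ` (K j :: (real ^ 'n set) set)"
proof -
  obtain e where "e j \<in> {-1, 1}" "(\<lambda>w. e j *\<^sub>R ext_pow j A w) ` K j \<subseteq> K j"
    using assms unfolding GSR_def K_nonneg_def by blast
  then show ?thesis
    by (rule image_Un_uminus_subset) (rule ext_pow_uminus)
qed

lemma GSR_wedge_map_in_cones:
  fixes K :: "nat \<Rightarrow> (real ^ ('n::{finite,linorder} set)) set"
  assumes "GSR K A" "invertible A" "length xs \<in> {1..CARD('n)}"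
    and "wedge xs \<in> (K (length xs) \<union> uminus ` K (length xs)) - {0}"
  shows "wedge (map (\<lambda>x. A *v x) xs) \<in> (K (length xs) \<union> uminus ` K (length xs)) - {0}"
proof -
  have "ext_pow (length xs) A (wedge xs) \<in> K (length xs) \<union> uminus ` K (length xs)"
    using GSR_ext_pow_image_subset[OF assms(1,3)] assms(4) by blast
  then show ?thesis
    using wedge_map_neq_0[OF assms(2)] assms(4) by (simp add: ext_pow_wedge)
qed

lemma That_invariant:
  fixes K :: "nat \<Rightarrow> (real ^ ('n::{finite,linorder} set)) set"
  assumes "GSR K A" "invertible A" "j \<in> {1..CARD('n)}"
  shows "(\<lambda>x. A *v x) ` That K j \<subseteq> That K j"
proof (rule image_subsetI)
  fix x assume x: "x \<in> That K j"
  show "A *v x \<in> That K j"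
  proof (cases "j = 1")
    case True
    then have "ext_pow 1 A (wedge [x]) \<in> K 1 \<union> uminus ` K 1"
      using GSR_ext_pow_image_subset[OF assms(1), of 1] x assms(3) by (auto simp: That_def)
    then show ?thesis
      using True ext_pow_wedge[of "[x]" A] by (simp add: That_def)
  next
    case False
    show ?thesis
    proof (cases "x = 0")
      case False
      then obtain xs where xs: "length xs = j - 1" "wedge (x # xs) \<in> (K j \<union> uminus ` K j) - {0}"
        using x \<open>j \<noteq> 1\<close> by (auto simp: That_def)
      then have "wedge (map (\<lambda>x. A *v x) (x # xs)) \<in> (K j \<union> uminus ` K j) - {0}"
        using GSR_wedge_map_in_cones[OF assms(1,2), of "x # xs"] assms(3) by simp
      then have "\<exists>ys. length ys = j - 1 \<and> wedge (A *v x # ys) \<in> (K j \<union> uminus ` K j) - {0}"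
        using xs(1) by (intro exI[of _ "map (\<lambda>x. A *v x) xs"]) simp
      then show ?thesis
        using \<open>j \<noteq> 1\<close> by (simp add: That_def)
    qed (use \<open>j \<noteq> 1\<close> in \<open>simp add: That_def\<close>)
  qed
qed

lemma Tseq_invariant:
  fixes K :: "nat \<Rightarrow> (real ^ ('n::{finite,linorder} set)) set"
  assumes "GSR K A" "invertible A"
  shows "Suc m \<le> CARD('n) \<Longrightarrow> (\<lambda>x. A *v x) ` Tseq K (Suc m) \<subseteq> Tseq K (Suc m)"
proof (induction m rule: less_induct)
  case (less m)
  show ?case
  proof (cases m)
    case 0
    then show ?thesis
      using That_invariant[OF assms, of 1] by simp
  next
    case (Suc i)
    define S where "S = {x. \<exists>xs. length xs = Suc i \<and>
      (\<forall>l<Suc i. xs ! l \<in> Tseq K (Suc l) - {0}) \<and>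
      wedge (x # xs) \<in> (K (Suc (Suc i)) \<union> uminus ` K (Suc (Suc i))) - {0}}"
    have A_neq_0: "A *v x \<noteq> 0" if "x \<noteq> 0" for x
      using assms(2) that invertible_left_inverse matrix_left_invertible_ker by blast
    have S_invariant: "(\<lambda>x. A *v x) ` S \<subseteq> S"
    proof (rule image_subsetI)
      fix x assume "x \<in> S"
      then obtain xs where xs: "length xs = Suc i" "\<forall>l<Suc i. xs ! l \<in> Tseq K (Suc l) - {0}"
        "wedge (x # xs) \<in> (K (Suc (Suc i)) \<union> uminus ` K (Suc (Suc i))) - {0}"
        unfolding S_def by blast
      have "map (\<lambda>x. A *v x) xs ! l \<in> Tseq K (Suc l) - {0}" if l: "l < Suc i" for l
        using less.IH[of l] less.prems l xs A_neq_0 Suc by auto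
      moreover have "wedge (map (\<lambda>x. A *v x) (x # xs)) \<in> (K (Suc (Suc i)) \<union> uminus ` K (Suc (Suc i))) - {0}"
        using GSR_wedge_map_in_cones[OF assms, of "x # xs"] less.prems Suc xs by simp
      ultimately show "A *v x \<in> S"
        unfolding S_def using xs(1) by (intro CollectI exI[of _ "map (\<lambda>x. A *v x) xs"]) simp
    qed
    have "(\<lambda>x. A *v x) ` closure S \<subseteq> closure S"
      by (rule image_closure_subset[OF matrix_vector_mult_linear_continuous_on closed_closure])
        (use S_invariant closure_subset in blast)
    then show ?thesis
      by (simp add: Suc S_def)
  qed
qed

theorem theorem21:
  fixes K :: "nat \<Rightarrow> (real ^ ('n::{finite,linorder} set)) set"
    and A :: "real ^ 'n::{finite,linorder} ^ 'n::{finite,linorder}"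
  assumes "TP_structure K"
    and "invertible A"
    and "GSR K A"
  shows "\<forall>j\<in>{1..CARD('n::{finite,linorder})}.
           (\<lambda>x. A *v x) ` That K j \<subseteq> That K j \<and>
           (\<lambda>x. A *v x) ` Tseq K j \<subseteq> Tseq K j"
proof
  fix j assume j: "j \<in> {1..CARD('n)}"
  then obtain m where "j = Suc m"
    by (cases j) auto
  then show "(\<lambda>x. A *v x) ` That K j \<subseteq> That K j \<and> (\<lambda>x. A *v x) ` Tseq K j \<subseteq> Tseq K j"
    using That_invariant[OF assms(3,2) j] Tseq_invariant[OF assms(3,2), of m] j by simp
qed

end
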